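(* Let $(M,d)$ be a complete separable metric space. Suppose that for every countable ordinal $\alpha<\omega_1$ the metric space $(\mathrm{S}_\alpha(\mathbb{Q}),d_\infty)$ bi-Lipschitzly embeds into $(M,d)$. Then every separable metric space bi-Lipschitzly embeds into $(M,d)$.
   Context: Notation: $[\mathbb{N}]^{<\omega}$ denotes the set of finite subsets of $\mathbb{N}$; for finite $A,B\subset\mathbb{N}$ and $n\in\mathbb{N}$ write $n\le A<B$ if $n\le\min A\le\max A<\min B$. Schreier families $\mathrm{S}_\alpha\subset[\mathbb{N}]^{<\omega}$, $\alpha<\omega_1$, are defined recursively: $\mathrm{S}_0=\{\{n\}:n\in\mathbb{N}\}$; $\mathrm{S}_{\alpha+1}=\{\bigcup_{j=1}^n E_j: n\in\mathbb{N}, E_j\in\mathrm{S}_\alpha, n\le E_1<E_2<\dots<E_n\}$; for a limit ordinal $\beta$, with a fixed sequence $(\alpha_n)$ of ordinals increasing to $\beta$, $\mathrm{S}_\beta=\{A\in[\mathbb{N}]^{<\omega}:\exists n\in\mathbb{N},\ n\le A \text{ and } A\in\mathrm{S}_{\alpha_n}\}$. For a countable set $\mathbb{E}\subset\mathbb{R}$, $\mathrm{S}_\alpha(\mathbb{E})=\{\sum_{i\in G}c_ie_i: G\in\mathrm{S}_\alpha,\ c_i\in\mathbb{E}\}\subset c_{00}$, where $(e_i)$ is the unit vector basis, equipped with the metric $d_\infty$ induced by the sup norm of $c_0$. A map $f:X\to Y$ between metric spaces is a bi-Lipschitz embedding if there are $s>0$, $D\ge1$ with $s\,d_X(x,y)\le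 d_Y(f(x),f(y))\le sD\,d_X(x,y)$ for all $x,y$. *)

theory Defs
  imports "HOL-Analysis.Analysis"
begin

text \<open>Naturals \<nat> = {1,2,...} are modelled as nat with the guard n \<ge> 1.\<close>

definition nle :: "nat \<Rightarrow> nat set \<Rightarrow> bool" where
  "nle n A \<longleftrightarrow> (\<forall>a\<in>A. n \<le> a)"

definition blt :: "nat set \<Rightarrow> nat set \<Rightarrow> bool" where
  "blt A B \<longleftrightarrow> (\<forall>a\<in>A. \<forall>b\<in>B. a < b)"

definition is_succ_of :: "'i::wellorder \<Rightarrow> 'i \<Rightarrow> bool" where
  "is_succ_of b a \<longleftrightarrow> a < b \<and> \<not> (\<exists>k. a < k \<and> k < b)"

definition is_limit :: "'i::wellorder \<Rightarrow> bool" where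
  "is_limit b \<longleftrightarrow> (\<exists>a. a < b) \<and> \<not> (\<exists>a. is_succ_of b a)"

definition fundamental_system :: "('i::wellorder \<Rightarrow> nat \<Rightarrow> 'i) \<Rightarrow> bool" where
  "fundamental_system seq \<longleftrightarrow>
     (\<forall>b. is_limit b \<longrightarrow>
        strict_mono_on {1..} (seq b) \<and> (\<forall>n\<ge>1. seq b n < b) \<and> (\<forall>a<b. \<exists>n\<ge>1. a < seq b n))"

definition schreier_system :: "('i::wellorder \<Rightarrow> nat \<Rightarrow> 'i) \<Rightarrow> ('i \<Rightarrow> nat set set) \<Rightarrow> bool" where
  "schreier_system seq S \<longleftrightarrow>
     (\<forall>a. \<not> (\<exists>b. b < a) \<longrightarrow> S a = {{n} | n. n \<ge> 1}) \<and>
     (\<forall>a b. is_succ_of b a \<longrightarrow>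
        S b = {(\<Union>j\<in>{1..n}. E j) | n E. n \<ge> 1 \<and> (\<forall>j\<in>{1..n}. E j \<in> S a) \<and>
                  nle n (E 1) \<and> (\<forall>j\<in>{1..<n}. blt (E j) (E (Suc j)))}) \<and>
     (\<forall>b. is_limit b \<longrightarrow> S b = {A. \<exists>n\<ge>1. nle n A \<and> A \<in> S (seq b n)})"

text \<open>The sup metric on c_00 (vectors as nat \<Rightarrow> real; coordinate 0 unused).\<close>
definition dinf :: "(nat \<Rightarrow> real) \<Rightarrow> (nat \<Rightarrow> real) \<Rightarrow> real" where
  "dinf x y = (SUP i. \<bar>x i - y i\<bar>)"

definition schreier_Q :: "nat set set \<Rightarrow> (nat \<Rightarrow> real) set" where
  "schreier_Q F = {x. \<exists>G\<in>F. \<exists>c. (\<forall>i\<in>G. c i \<in> \<rat>) \<and> x = (\<lambda>i. if i \<in> G then c i else 0)}"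

definition bilip_embedding ::
  "('a \<Rightarrow> 'a \<Rightarrow> real) \<Rightarrow> 'a set \<Rightarrow> ('b \<Rightarrow> 'b \<Rightarrow> real) \<Rightarrow> 'b set \<Rightarrow> ('a \<Rightarrow> 'b) \<Rightarrow> bool" where
  "bilip_embedding dX X dY Y f \<longleftrightarrow> f ` X \<subseteq> Y \<and>
     (\<exists>s>0. \<exists>D\<ge>1. \<forall>x\<in>X. \<forall>y\<in>X. s * dX x y \<le> dY (f x) (f y) \<and> dY (f x) (f y) \<le> s * D * dX x y)"

definition separable_set :: "'a::metric_space set \<Rightarrow> bool" where
  "separable_set X \<longleftrightarrow> (\<exists>D. countable D \<and> D \<subseteq> X \<and> X \<subseteq> closure D)"

end

theory Submission
  imports Defs
begin

text \<open>Every separable metric space embeds bi-Lipschitzly into the rational finitely supported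
  vectors on any infinite \<open>N \<subseteq> \<nat>\<close> with the sup metric (Aharoni's coordinates, rounded to
  dyadic rationals, in the limit). So it suffices to embed these vectors into \<open>M\<close>.
  Fix a countable dense \<open>C \<subseteq> M\<close> and consider the tree whose nodes are finite sets \<open>A\<close> with maps
  from a finite grid of rational vectors supported in \<open>A\<close> into \<open>C\<close> that have distortion \<open>(L, U)\<close> up
  to an additive error \<open>2\<^sup>-\<^sup>|\<^sup>A\<^sup>|\<close>; children add a larger element to \<open>A\<close>. An embedding of
  \<open>S\<^sub>\<alpha>(\<rat>)\<close> with constants in \<open>[L, U]\<close> gives the tree rank at least \<open>\<alpha>\<close>, because
  the Schreier family \<open>S\<^sub>\<alpha>\<close> itself has rank \<open>\<alpha>\<close>. By pigeonhole one pair \<open>(L, U)\<close> serves cofinally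
  many \<open>\<alpha> < \<omega>\<^sub>1\<close>, so this countably branching tree has unbounded rank and therefore an
  infinite branch. By completeness, the maps along the branch converge to an \<open>(L, U)\<close>-embedding
  of the rational finitely supported vectors on the union of the sets.\<close>

lemma bilip_embedding_bounds:
  assumes "bilip_embedding dX X dist Y f"
  obtains s U where "s > 0"
    "\<forall>x\<in>X. \<forall>y\<in>X. s * dX x y \<le> dist (f x) (f y) \<and> dist (f x) (f y) \<le> U * dX x y"
    "\<forall>x\<in>X. \<forall>y\<in>X. 0 \<le> dX x y"
proof -
  obtain s D where sD: "s > 0" "D \<ge> 1"
    "\<forall>x\<in>X. \<forall>y\<in>X. s * dX x y \<le> dist (f x) (f y) \<and> dist (f x) (f y) \<le> s * D * dX x y"
    using assms unfolding bilip_embedding_def by blast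
  have "0 \<le> dX x y" if "x \<in> X" "y \<in> X" for x y
  proof -
    have "0 \<le> s * D * dX x y" using sD(3) that zero_le_dist order_trans by blast
    moreover have "0 < s * D" using sD(1,2) by simp
    ultimately show ?thesis using zero_le_mult_iff[of "s * D" "dX x y"] by linarith
  qed
  then show thesis using sD by (intro that[of s "s * D"]) auto
qed

lemma bilip_embeddingI:
  assumes "L > 0" "\<forall>x\<in>X. \<forall>y\<in>X. L * dist x y \<le> dist (f x) (f y) \<and> dist (f x) (f y) \<le> U * dist x y"
  shows "bilip_embedding dist X dist UNIV f"
proof -
  have "U * dist x y \<le> L * max 1 (U / L) * dist x y" for x y
    using \<open>L > 0\<close> by (intro mult_right_mono) (auto simp: field_simps max_def)
  then have "\<forall>x\<in>X. \<forall>y\<in>X. L * dist x y \<le> dist (f x) (f y)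
      \<and> dist (f x) (f y) \<le> L * max 1 (U / L) * dist x y"
    using assms(2) by (meson order_trans)
  moreover have "max 1 (U / L) \<ge> 1" by simp
  ultimately show ?thesis unfolding bilip_embedding_def using \<open>L > 0\<close> by blast
qed

lemma abs_dist_diff_le_sum: "\<bar>dist a b - dist c d\<bar> \<le> dist a c + dist b d"
  using dist_triangle[of a b c] dist_triangle[of c b d] dist_triangle[of c d a] dist_triangle[of a d b]
  by (simp add: dist_commute abs_le_iff)

lemma nat_ceiling_inverse:
  fixes s :: real
  assumes "s > 0"
  shows "nat \<lceil>1 / s\<rceil> > 0" "1 / real (nat \<lceil>1 / s\<rceil>) \<le> s"
proof -
  define k where "k = nat \<lceil>1 / s\<rceil>"
  show "nat \<lceil>1 / s\<rceil> > 0" using assms by simp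
  then have "k > 0" by (simp add: k_def)
  have "1 / s \<le> real k" unfolding k_def by (rule real_nat_ceiling_ge)
  then have "1 \<le> s * real k" using assms by (simp add: divide_le_eq mult.commute)
  then show "1 / real (nat \<lceil>1 / s\<rceil>) \<le> s"
    using \<open>k > 0\<close> unfolding k_def[symmetric] by (simp add: divide_le_eq mult.commute)
qed

section \<open>Ranks in trees and countable ordinals\<close>

inductive rank_at_least :: "'n set \<Rightarrow> ('n \<Rightarrow> 'n \<Rightarrow> bool) \<Rightarrow> 'i::wellorder \<Rightarrow> 'n \<Rightarrow> bool"
  for T ch where
  "t \<in> T \<Longrightarrow> (\<forall>b<a. \<exists>c. ch t c \<and> rank_at_least T ch b c) \<Longrightarrow> rank_at_least T ch a t"

lemma rank_at_least_in_tree: "rank_at_least T ch a t \<Longrightarrow> t \<in> T"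
  by (erule rank_at_least.cases) simp

lemma rank_at_least_children:
  "rank_at_least T ch a t \<Longrightarrow> b < a \<Longrightarrow> \<exists>c. ch t c \<and> rank_at_least T ch b c"
  by (erule rank_at_least.cases) blast

lemma rank_at_least_mono:
  assumes "rank_at_least T ch a t" "b \<le> a"
  shows "rank_at_least T ch b t"
proof (rule rank_at_least.intros)
  show "t \<in> T" using assms(1) by (rule rank_at_least_in_tree)
  show "\<forall>c<b. \<exists>d. ch t d \<and> rank_at_least T ch c d"
    using assms by (blast intro: rank_at_least_children less_le_trans)
qed

lemma ordinal_cases:
  fixes b :: "'i::wellorder"
  obtains "\<not> (\<exists>a. a < b)" | a where "is_succ_of b a" | "is_limit b"
  unfolding is_limit_def by blast

lemma successor_below:
  fixes a b :: "'i::wellorder"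
  assumes "a < b"
  obtains s where "is_succ_of s a" "s \<le> b"
proof
  define s where "s = (LEAST k. a < k)"
  show "is_succ_of s a"
    unfolding is_succ_of_def s_def using assms by (meson LeastI not_less_Least)
  show "s \<le> b"
    unfolding s_def using assms by (rule Least_le)
qed

context
  assumes countable_segments: "\<forall>a::'i::wellorder. countable {b. b < a}"
    and uncountable: "\<not> countable (UNIV :: 'i set)"
begin

lemma countable_has_strict_upper_bound:
  assumes "countable (Y :: 'i set)"
  obtains g where "\<forall>y\<in>Y. y < g"
proof -
  have "countable (\<Union>y\<in>Y. insert y {b. b < y})"
    using assms countable_segments by (auto intro!: countable_UN)
  then obtain g where "g \<notin> (\<Union>y\<in>Y. insert y {b. b < y})"
    using uncountable by (metis UNIV_eq_I)
  then have "\<forall>y\<in>Y. y < g" by (auto simp: not_less_iff_gr_or_eq)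
  then show thesis by (rule that)
qed

lemma no_greatest: "\<exists>b. (a::'i) < b"
  using countable_has_strict_upper_bound[of "{a}"] by auto

lemma countable_range_cofinal_fibre:
  fixes K :: "'i \<Rightarrow> 'k::countable"
  obtains \<kappa> where "\<forall>a. \<exists>b\<ge>a. K b = \<kappa>"
proof (rule ccontr)
  assume "\<not> thesis"
  then have "\<forall>\<kappa>. \<exists>a. \<forall>b\<ge>a. K b \<noteq> \<kappa>" using that by blast
  then obtain af where af: "\<And>\<kappa> b. af \<kappa> \<le> b \<Longrightarrow> K b \<noteq> \<kappa>" by metis
  obtain g where "\<forall>y\<in>range af. y < g"
    using countable_has_strict_upper_bound[of "range af"] by auto
  then have "af (K g) \<le> g" by (simp add: less_imp_le)
  then show False using af by blast
qed

lemma rank_at_least_all_in_countable: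
  assumes "countable Z" and "\<forall>a::'i. \<exists>t\<in>Z. rank_at_least T ch a t"
  shows "\<exists>t\<in>Z. \<forall>a::'i. rank_at_least T ch a t"
proof (rule ccontr)
  assume "\<not> ?thesis"
  then have "\<forall>t\<in>Z. \<exists>a::'i. \<not> rank_at_least T ch a t" by blast
  then obtain af :: "_ \<Rightarrow> 'i" where af: "\<forall>t\<in>Z. \<not> rank_at_least T ch (af t) t"
    by (rule bchoice[THEN exE])
  obtain g where g: "\<forall>y\<in>af ` Z. y < g"
    using countable_has_strict_upper_bound[of "af ` Z"] assms(1) by auto
  obtain t where "t \<in> Z" and t: "rank_at_least T ch g t" using assms(2) by blast
  have "af t \<le> g" using g \<open>t \<in> Z\<close> by (simp add: less_imp_le)
  with t have "rank_at_least T ch (af t) t" by (rule rank_at_least_mono)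
  with af \<open>t \<in> Z\<close> show False by blast
qed

lemma unbounded_rank_child:
  assumes branching: "\<forall>t\<in>T. countable {c. ch t c \<and> c \<in> T}"
    and t: "\<forall>a::'i. rank_at_least T ch a t"
  obtains c where "ch t c" "\<forall>a::'i. rank_at_least T ch a c"
proof -
  have "t \<in> T" by (rule rank_at_least_in_tree[OF t[rule_format]])
  then have countable: "countable {c. ch t c \<and> c \<in> T}" using branching by blast
  have "\<forall>a::'i. \<exists>c\<in>{c. ch t c \<and> c \<in> T}. rank_at_least T ch a c"
  proof
    fix a :: 'i
    obtain d where "a < d" using no_greatest by blast
    then obtain c where "ch t c" and c: "rank_at_least T ch a c"
      using rank_at_least_children[OF t[rule_format]] by blast
    moreover have "c \<in> T" using c by (rule rank_at_least_in_tree)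
    ultimately show "\<exists>c\<in>{c. ch t c \<and> c \<in> T}. rank_at_least T ch a c" by blast
  qed
  then obtain c where "c \<in> {c. ch t c \<and> c \<in> T}" "\<forall>a::'i. rank_at_least T ch a c"
    using rank_at_least_all_in_countable[OF countable] by blast
  then show thesis by (intro that) simp_all
qed

lemma infinite_branch_of_unbounded_rank:
  assumes branching: "\<forall>t\<in>T. countable {c. ch t c \<and> c \<in> T}"
    and "countable Z" and "\<forall>a::'i. \<exists>t\<in>Z. rank_at_least T ch a t"
  obtains f where "f 0 \<in> Z" "\<And>n. f n \<in> T" "\<And>n. ch (f n) (f (Suc n))"
proof -
  define G where "G t \<longleftrightarrow> (\<forall>a::'i. rank_at_least T ch a t)" for t
  obtain t0 where "t0 \<in> Z" "G t0"
    using rank_at_least_all_in_countable[OF assms(2,3)] unfolding G_def by blast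
  have "\<exists>f. \<forall>n. (G (f n) \<and> (n = 0 \<longrightarrow> f n = t0)) \<and> ch (f n) (f (Suc n))"
  proof (rule dependent_nat_choice)
    fix t and n :: nat assume "G t \<and> (n = 0 \<longrightarrow> t = t0)"
    then have "\<forall>a::'i. rank_at_least T ch a t" unfolding G_def by blast
    then obtain c where "ch t c" "G c"
      unfolding G_def by (rule unbounded_rank_child[OF branching])
    then show "\<exists>c. (G c \<and> (Suc n = 0 \<longrightarrow> c = t0)) \<and> ch t c" by blast
  qed (use \<open>G t0\<close> in blast)
  then obtain f where "\<forall>n. (G (f n) \<and> (n = 0 \<longrightarrow> f n = t0)) \<and> ch (f n) (f (Suc n))"
    by blast
  then have f: "\<And>n. G (f n)" "f 0 = t0" "\<And>n. ch (f n) (f (Suc n))" by simp_all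
  show thesis
  proof (rule that)
    show "f 0 \<in> Z" using f(2) \<open>t0 \<in> Z\<close> by simp
    show "f n \<in> T" for n
      by (rule rank_at_least_in_tree[OF f(1)[unfolded G_def, rule_format]])
  qed (rule f(3))
qed

lemma cofinal_uniform_bilipschitz:
  fixes Q :: "'i \<Rightarrow> 'v set"
  assumes "\<forall>a. \<exists>f :: 'v \<Rightarrow> 'm::metric_space. bilip_embedding dX (Q a) dist UNIV f"
  obtains L U where "L > 0" "U \<ge> 0"
    "\<forall>a. \<exists>b\<ge>a. \<exists>g :: 'v \<Rightarrow> 'm. \<forall>v\<in>Q b. \<forall>w\<in>Q b.
        L * dX v w \<le> dist (g v) (g w) \<and> dist (g v) (g w) \<le> U * dX v w"
proof -
  define good where "good a g s U \<longleftrightarrow> s > 0 \<and> (\<forall>v\<in>Q a. \<forall>w\<in>Q a. 0 \<le> dX v w \<and>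
      s * dX v w \<le> dist (g v) (g w) \<and> dist (g v) (g w) \<le> U * dX v w)"
    for a and g :: "'v \<Rightarrow> 'm" and s U :: real
  have "\<exists>g s U. good a g s U" for a
  proof -
    obtain g :: "'v \<Rightarrow> 'm" where "bilip_embedding dX (Q a) dist UNIV g" using assms by blast
    then obtain s U where "s > 0"
      "\<forall>x\<in>Q a. \<forall>y\<in>Q a. s * dX x y \<le> dist (g x) (g y) \<and> dist (g x) (g y) \<le> U * dX x y"
      "\<forall>x\<in>Q a. \<forall>y\<in>Q a. 0 \<le> dX x y"
      by (rule bilip_embedding_bounds)
    then show ?thesis unfolding good_def by blast
  qed
  then obtain g s U where good: "\<And>a. good a (g a) (s a) (U a)" by metis
  define key where "key a = (nat \<lceil>1 / s a\<rceil>, nat \<lceil>U a\<rceil>)" for a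
  obtain k1 k2 where cofinal: "\<forall>a. \<exists>b\<ge>a. key b = (k1, k2)"
    using countable_range_cofinal_fibre[of key] by (metis surj_pair)
  have s_pos: "s a > 0" for a using good[of a] by (simp add: good_def)
  have constants: "1 / real k1 \<le> s b" "U b \<le> real k2" "k1 > 0" if "key b = (k1, k2)" for b
  proof -
    have "k1 = nat \<lceil>1 / s b\<rceil>" "k2 = nat \<lceil>U b\<rceil>" using that by (simp_all add: key_def)
    then show "1 / real k1 \<le> s b" "U b \<le> real k2" "k1 > 0"
      using nat_ceiling_inverse[OF s_pos[of b]] real_nat_ceiling_ge[of "U b"] by simp_all
  qed
  show thesis
  proof (rule that)
    obtain b where "key b = (k1, k2)" using cofinal by blast
    then show "1 / real k1 > 0" "real k2 \<ge> 0" using constants(3) by simp_all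
    show "\<forall>a. \<exists>b\<ge>a. \<exists>g :: 'v \<Rightarrow> 'm. \<forall>v\<in>Q b. \<forall>w\<in>Q b.
        1 / real k1 * dX v w \<le> dist (g v) (g w) \<and> dist (g v) (g w) \<le> real k2 * dX v w"
    proof
      fix a
      obtain b where "b \<ge> a" "key b = (k1, k2)" using cofinal by blast
      then have "1 / real k1 * dX v w \<le> dist (g b v) (g b w) \<and> dist (g b v) (g b w) \<le> real k2 * dX v w"
        if "v \<in> Q b" "w \<in> Q b" for v w
        using good[of b] that constants unfolding good_def by (meson mult_right_mono order_trans)
      then show "\<exists>b\<ge>a. \<exists>g :: 'v \<Rightarrow> 'm. \<forall>v\<in>Q b. \<forall>w\<in>Q b.
          1 / real k1 * dX v w \<le> dist (g v) (g w) \<and> dist (g v) (g w) \<le> real k2 * dX v w"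
        using \<open>b \<ge> a\<close> by blast
    qed
  qed
qed

end

section \<open>Schreier families\<close>

context
  fixes seq :: "'i::wellorder \<Rightarrow> nat \<Rightarrow> 'i" and S :: "'i \<Rightarrow> nat set set"
  assumes fundamental: "fundamental_system seq" and schreier: "schreier_system seq S"
begin

lemmas schreier_zero = schreier[unfolded schreier_system_def, THEN conjunct1, rule_format]
  and schreier_succ = schreier[unfolded schreier_system_def, THEN conjunct2, THEN conjunct1, rule_format]
  and schreier_limit = schreier[unfolded schreier_system_def, THEN conjunct2, THEN conjunct2, rule_format]

lemma fundamental_seq: "is_limit b \<Longrightarrow> n \<ge> 1 \<Longrightarrow> seq b n < b"
  and fundamental_seq_cofinal: "is_limit b \<Longrightarrow> a < b \<Longrightarrow> \<exists>n\<ge>1. a < seq b n"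
  using fundamental unfolding fundamental_system_def by blast+

lemma schreier_succ_single: "is_succ_of b a \<Longrightarrow> B \<in> S a \<Longrightarrow> nle 1 B \<Longrightarrow> B \<in> S b"
  using schreier_succ[of b a] by (auto intro!: exI[of _ 1] exI[of _ "\<lambda>_. B"])

lemma schreier_succ_pair:
  assumes "is_succ_of b a" "B \<in> S a" "B' \<in> S a" "nle 2 B" "blt B B'"
  shows "B \<union> B' \<in> S b"
proof -
  define E where "E j = (if j = 1 then B else B')" for j :: nat
  have "{1..2::nat} = {1, 2}" "{1..<2::nat} = {1}" by auto
  then have "(\<Union>j\<in>{1..2}. E j) \<in> S b"
    using assms unfolding schreier_succ[OF assms(1)]
    by (intro CollectI exI[of _ 2] exI[of _ E]) (auto simp: E_def)
  moreover have "(\<Union>j\<in>{1..2::nat}. E j) = B \<union> B'"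
    using \<open>{1..2::nat} = {1, 2}\<close> by (auto simp: E_def)
  ultimately show ?thesis by simp
qed

lemma schreier_singleton: "m \<ge> 1 \<Longrightarrow> {m} \<in> S b"
proof (induction b rule: less_induct)
  case (less b)
  show ?case
  proof (cases b rule: ordinal_cases)
    case 1 then show ?thesis using schreier_zero less.prems by auto
  next
    case (2 a)
    then have "a < b" by (simp add: is_succ_of_def)
    then have "{m} \<in> S a" using less.IH less.prems by blast
    then show ?thesis
      by (rule schreier_succ_single[OF 2]) (use less.prems in \<open>simp add: nle_def\<close>)
  next
    case 3
    then have "seq b 1 < b" by (simp add: fundamental_seq)
    then have "{m} \<in> S (seq b 1)" using less.IH less.prems by blast
    then show ?thesis
      using less.prems unfolding schreier_limit[OF 3] nle_def by (intro CollectI exI[of _ 1]) auto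
  qed
qed

lemma schreier_eventually_mono:
  "g \<le> b \<Longrightarrow> \<exists>p\<ge>1. \<forall>B\<in>S g. nle p B \<longrightarrow> B \<in> S b"
proof (induction b arbitrary: g rule: less_induct)
  case (less b)
  show ?case
  proof (cases "g = b")
    case True then show ?thesis by auto
  next
    case False
    with less.prems have "g < b" by simp
    show ?thesis
    proof (cases b rule: ordinal_cases)
      case 1 then show ?thesis using \<open>g < b\<close> by blast
    next
      case (2 a)
      then have "a < b" "g \<le> a" using \<open>g < b\<close> unfolding is_succ_of_def by (auto simp: not_less)
      then obtain p where "p \<ge> 1" "\<forall>B\<in>S g. nle p B \<longrightarrow> B \<in> S a" using less.IH by blast
      then show ?thesis using 2 by (metis schreier_succ_single nle_def order.trans)
    next
      case 3
      obtain n where n: "n \<ge> 1" "g < seq b n" using fundamental_seq_cofinal[OF 3 \<open>g < b\<close>] by blast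
      then obtain p where "p \<ge> 1" "\<forall>B\<in>S g. nle p B \<longrightarrow> B \<in> S (seq b n)"
        using less.IH fundamental_seq[OF 3] by (meson less_imp_le)
      then show ?thesis using n
        by (intro exI[of _ "max p n"]) (auto simp: schreier_limit[OF 3] nle_def)
    qed
  qed
qed

lemma schreier_insert:
  assumes "g < b"
  obtains m n' where "n \<le> m" "m < n'" "\<forall>B\<in>S g. nle n' B \<longrightarrow> insert m B \<in> S b"
proof -
  obtain s where s: "is_succ_of s g" "s \<le> b" using successor_below[OF assms] .
  obtain p where p: "p \<ge> 1" "\<forall>B\<in>S s. nle p B \<longrightarrow> B \<in> S b"
    using schreier_eventually_mono[OF s(2)] by blast
  define m where "m = max n (max p 2)"
  have "insert m B \<in> S b" if B: "B \<in> S g" "nle (Suc m) B" for B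
  proof -
    have "{m} \<union> B \<in> S s"
    proof (rule schreier_succ_pair[OF s(1)])
      show "{m} \<in> S g" by (simp add: schreier_singleton m_def)
    qed (use B in \<open>auto simp: nle_def blt_def m_def\<close>)
    moreover have "nle p ({m} \<union> B)" using B by (auto simp: nle_def m_def)
    ultimately show ?thesis using p by simp
  qed
  moreover have "n \<le> m" by (simp add: m_def)
  ultimately show thesis using that[of m "Suc m"] by blast
qed

lemma schreier_rank:
  fixes \<Phi> :: "nat set \<Rightarrow> 'n" and F :: "nat set set"
  assumes node: "\<And>A. finite A \<Longrightarrow> A \<in> F \<Longrightarrow> \<Phi> A \<in> T"
    and child: "\<And>A m. finite A \<Longrightarrow> insert m A \<in> F \<Longrightarrow> \<forall>a\<in>A. a < m
      \<Longrightarrow> ch (\<Phi> A) (\<Phi> (insert m A))"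
    and hereditary: "\<And>A B. A \<subseteq> B \<Longrightarrow> B \<in> F \<Longrightarrow> A \<in> F"
  shows "finite A \<Longrightarrow> A \<in> F \<Longrightarrow> \<forall>a\<in>A. a < n \<Longrightarrow> \<forall>B\<in>S b. nle n B \<longrightarrow> A \<union> B \<in> F
     \<Longrightarrow> rank_at_least T ch b (\<Phi> A)"
proof (induction b arbitrary: A n rule: less_induct)
  case (less b)
  show ?case
  proof (rule rank_at_least.intros)
    show "\<Phi> A \<in> T" using node less.prems by blast
    show "\<forall>g<b. \<exists>c. ch (\<Phi> A) c \<and> rank_at_least T ch g c"
    proof (intro allI impI)
      fix g assume "g < b"
      then obtain m n' where m: "n \<le> m" "m < n'"
        and mB: "\<forall>B\<in>S g. nle n' B \<longrightarrow> insert m B \<in> S b"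
        by (rule schreier_insert)
      have AB: "insert m A \<union> B \<in> F" if "B \<in> S g" "nle n' B" for B
      proof -
        have "insert m B \<in> S b" using mB that by blast
        moreover have "nle n (insert m B)" using that m by (auto simp: nle_def)
        ultimately have "A \<union> insert m B \<in> F" using less.prems(4) by blast
        then show ?thesis by simp
      qed
      have "insert m A \<union> {n'} \<in> F"
        using m by (intro AB schreier_singleton) (auto simp: nle_def)
      then have mA: "insert m A \<in> F" using hereditary by blast
      have lt: "\<forall>a\<in>A. a < m" using less.prems m by auto
      have "rank_at_least T ch g (\<Phi> (insert m A))"
      proof (rule less.IH[OF \<open>g < b\<close>])
        show "\<forall>a\<in>insert m A. a < n'" using lt m by auto
      qed (use less.prems mA AB in auto)
      moreover have "ch (\<Phi> A) (\<Phi> (insert m A))" using child less.prems mA lt by blast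
      ultimately show "\<exists>c. ch (\<Phi> A) c \<and> rank_at_least T ch g c" by blast
    qed
  qed
qed

lemma schreier_root_rank:
  fixes \<Phi> :: "nat set \<Rightarrow> 'n"
  assumes "\<And>A G. finite A \<Longrightarrow> G \<in> S b \<Longrightarrow> A \<subseteq> G \<Longrightarrow> \<Phi> A \<in> T"
    and "\<And>A G m. finite A \<Longrightarrow> G \<in> S b \<Longrightarrow> insert m A \<subseteq> G \<Longrightarrow> \<forall>a\<in>A. a < m
          \<Longrightarrow> ch (\<Phi> A) (\<Phi> (insert m A))"
  shows "rank_at_least T ch b (\<Phi> {})"
proof (rule schreier_rank[where F = "{A. \<exists>G\<in>S b. A \<subseteq> G}" and n = 1])
  show "{} \<in> {A. \<exists>G\<in>S b. A \<subseteq> G}" using schreier_singleton[of 1 b] by blast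
  show "A \<in> {A. \<exists>G\<in>S b. A \<subseteq> G}" if "A \<subseteq> B" "B \<in> {A. \<exists>G\<in>S b. A \<subseteq> G}" for A B
    using that by blast
  show "\<Phi> A \<in> T" if "finite A" "A \<in> {A. \<exists>G\<in>S b. A \<subseteq> G}" for A
    using that assms(1) by blast
  show "ch (\<Phi> A) (\<Phi> (insert m A))"
    if "finite A" "insert m A \<in> {A. \<exists>G\<in>S b. A \<subseteq> G}" "\<forall>a\<in>A. a < m" for A m
    using that assms(2) by blast
qed auto

end

section \<open>Finite rational grids and the tree of approximate embeddings\<close>

definition dyad :: "nat \<Rightarrow> real" where
  "dyad k = 1 / 2 ^ k"

lemma dyad_pos: "dyad k > 0"
  by (simp add: dyad_def)

lemma dyad_Suc: "dyad (Suc k) = dyad k / 2"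
  by (simp add: dyad_def)

lemma dyad_antimono: "k \<le> l \<Longrightarrow> dyad l \<le> dyad k"
  unfolding dyad_def by (intro divide_left_mono power_increasing) auto

lemma dyad_Rats: "dyad k \<in> \<rat>"
  by (simp add: dyad_def)

lemma dyad_tendsto_zero: "dyad \<longlonglongrightarrow> 0"
proof -
  have "(\<lambda>n. inverse ((2::real) ^ n)) \<longlonglongrightarrow> 0" by (rule LIMSEQ_inverse_realpow_zero) simp
  then show ?thesis by (simp add: dyad_def[abs_def] divide_inverse)
qed

definition rat_grid :: "nat \<Rightarrow> real set" where
  "rat_grid k = insert 0 ((\<lambda>n. of_rat (from_nat n)) ` {..k})"

lemma rat_grid_finite: "finite (rat_grid k)"
  by (simp add: rat_grid_def)

lemma zero_in_rat_grid: "0 \<in> rat_grid k"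
  by (simp add: rat_grid_def)

lemma rat_grid_mono: "k \<le> l \<Longrightarrow> rat_grid k \<subseteq> rat_grid l"
  by (auto simp: rat_grid_def)

lemma rat_grid_Rats: "x \<in> rat_grid k \<Longrightarrow> x \<in> \<rat>"
  by (auto simp: rat_grid_def)

lemma Rats_in_rat_grid:
  assumes "q \<in> \<rat>" obtains k where "q \<in> rat_grid k"
proof -
  obtain r where r: "q = of_rat r" using assms by (auto simp: Rats_def)
  have "q \<in> rat_grid (to_nat r)"
    unfolding rat_grid_def r by (intro insertI2 image_eqI[of _ _ "to_nat r"]) auto
  then show thesis by (rule that)
qed

text \<open>The resolution of the grid grows with \<open>|A|\<close>: each node of the tree carries only
  finitely many vectors, yet every rational vector lies on the grids far enough along a branch.\<close>

definition grid_vectors :: "nat set \<Rightarrow> (nat \<Rightarrow> real) set" where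
  "grid_vectors A = {v. (\<forall>i. i \<notin> A \<longrightarrow> v i = 0) \<and> (\<forall>i\<in>A. v i \<in> rat_grid (card A))}"

lemma grid_vectors_finite:
  assumes "finite A" shows "finite (grid_vectors A)"
proof -
  have "grid_vectors A \<subseteq> (\<lambda>g i. if i \<in> A then g i else 0) ` (PiE A (\<lambda>_. rat_grid (card A)))"
  proof
    fix v assume v: "v \<in> grid_vectors A"
    then have "v = (\<lambda>i. if i \<in> A then restrict v A i else 0)"
      by (auto simp: grid_vectors_def)
    moreover have "restrict v A \<in> PiE A (\<lambda>_. rat_grid (card A))"
      using v by (auto simp: grid_vectors_def)
    ultimately show "v \<in> (\<lambda>g i. if i \<in> A then g i else 0) ` (PiE A (\<lambda>_. rat_grid (card A)))"
      by blast
  qed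
  moreover have "finite (PiE A (\<lambda>_. rat_grid (card A)))"
    using assms by (simp add: finite_PiE rat_grid_finite)
  ultimately show ?thesis using finite_subset by blast
qed

lemma grid_vectors_mono:
  assumes "finite B" "A \<subseteq> B" shows "grid_vectors A \<subseteq> grid_vectors B"
proof -
  have "rat_grid (card A) \<subseteq> rat_grid (card B)" using assms by (simp add: card_mono rat_grid_mono)
  then show ?thesis using assms zero_in_rat_grid by (auto simp: grid_vectors_def)
qed

lemma grid_vectors_Rats: "v \<in> grid_vectors A \<Longrightarrow> v i \<in> \<rat>"
  by (cases "i \<in> A") (auto simp: grid_vectors_def rat_grid_Rats)

lemma grid_vectors_subset_schreier_Q:
  assumes "A \<subseteq> G" "G \<in> F" shows "grid_vectors A \<subseteq> schreier_Q F"
proof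
  fix v assume v: "v \<in> grid_vectors A"
  have "v = (\<lambda>i. if i \<in> G then v i else 0)"
  proof
    show "v i = (if i \<in> G then v i else 0)" for i using v assms(1) by (auto simp: grid_vectors_def)
  qed
  then show "v \<in> schreier_Q F"
    unfolding schreier_Q_def using assms(2) grid_vectors_Rats[OF v] by blast
qed

lemma abs_le_dinf:
  assumes "finite {i. v i \<noteq> w i}"
  shows "\<bar>v i - w i\<bar> \<le> dinf v w"
proof -
  have "range (\<lambda>i. \<bar>v i - w i\<bar>) \<subseteq> insert 0 ((\<lambda>i. \<bar>v i - w i\<bar>) ` {i. v i \<noteq> w i})" by auto
  then have "bdd_above (range (\<lambda>i. \<bar>v i - w i\<bar>))"
    using assms by (meson bdd_above_mono bdd_above_finite finite_imageI finite_insert)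
  then show ?thesis unfolding dinf_def by (intro cSUP_upper) auto
qed

lemma dinf_le: "(\<And>i. \<bar>v i - w i\<bar> \<le> c) \<Longrightarrow> dinf v w \<le> c"
  unfolding dinf_def by (intro cSUP_least) auto

type_synonym 'm grid_map = "nat set \<times> ((nat \<Rightarrow> real) \<Rightarrow> 'm)"

definition approx_tree :: "real \<Rightarrow> real \<Rightarrow> 'm::metric_space set \<Rightarrow> 'm grid_map set" where
  "approx_tree L U C = {(A, h). finite A \<and> h \<in> grid_vectors A \<rightarrow>\<^sub>E C \<and>
      (\<forall>v\<in>grid_vectors A. \<forall>w\<in>grid_vectors A. L * dinf v w - dyad (card A) \<le> dist (h v) (h w) \<and>
          dist (h v) (h w) \<le> U * dinf v w + dyad (card A))}"

definition approx_child :: "'m::metric_space grid_map \<Rightarrow> 'm grid_map \<Rightarrow> bool" where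
  "approx_child t t' \<longleftrightarrow> (\<exists>m. (\<forall>a\<in>fst t. a < m) \<and> fst t' = insert m (fst t)) \<and>
      (\<forall>v\<in>grid_vectors (fst t). dist (snd t' v) (snd t v) \<le> dyad (card (fst t)))"

lemma approx_tree_countable_children:
  assumes "countable C" and "t \<in> approx_tree L U C"
  shows "countable {c. approx_child t c \<and> c \<in> approx_tree L U C}"
proof -
  obtain A h where t: "t = (A, h)" by (cases t)
  have "{c. approx_child t c \<and> c \<in> approx_tree L U C}
      \<subseteq> (\<Union>m. {insert m A} \<times> (grid_vectors (insert m A) \<rightarrow>\<^sub>E C))"
  proof
    fix c assume c: "c \<in> {c. approx_child t c \<and> c \<in> approx_tree L U C}"
    obtain A' h' where c': "c = (A', h')" by (cases c)
    obtain m where "A' = insert m A" using c c' t by (auto simp: approx_child_def)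
    moreover have "h' \<in> grid_vectors A' \<rightarrow>\<^sub>E C" using c c' by (simp add: approx_tree_def)
    ultimately show "c \<in> (\<Union>m. {insert m A} \<times> (grid_vectors (insert m A) \<rightarrow>\<^sub>E C))"
      using c' by blast
  qed
  moreover have "countable (\<Union>m. {insert m A} \<times> (grid_vectors (insert m A) \<rightarrow>\<^sub>E C))"
    using assms t by (intro countable_UN countable_SIGMA countable_PiE grid_vectors_finite)
      (auto simp: approx_tree_def)
  ultimately show ?thesis using countable_subset by blast
qed

lemma approx_tree_countable_roots:
  assumes "countable C"
  shows "countable {t \<in> approx_tree L U C. fst t = {}}"
proof -
  have "{t \<in> approx_tree L U C. fst t = {}} \<subseteq> {{}} \<times> (grid_vectors {} \<rightarrow>\<^sub>E C)"
    by (auto simp: approx_tree_def)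
  moreover have "countable ({{}} \<times> (grid_vectors {} \<rightarrow>\<^sub>E C))"
    using assms by (intro countable_SIGMA countable_PiE grid_vectors_finite) auto
  ultimately show ?thesis using countable_subset by blast
qed

definition near :: "'m::metric_space set \<Rightarrow> 'm \<Rightarrow> real \<Rightarrow> 'm" where
  "near C p e = (SOME c. c \<in> C \<and> dist c p < e)"

lemma near_dense:
  assumes "closure C = UNIV" "e > 0"
  shows "near C p e \<in> C" "dist (near C p e) p < e"
proof -
  obtain c where "c \<in> C \<and> dist c p < e" using assms closure_approachable by blast
  then have "near C p e \<in> C \<and> dist (near C p e) p < e"
    unfolding near_def by (rule someI)
  then show "near C p e \<in> C" "dist (near C p e) p < e" by simp_all
qed

text \<open>Moving \<open>g\<close> into \<open>C\<close> by a quarter of the error budget \<open>2\<^sup>-\<^sup>|\<^sup>A\<^sup>|\<close> leaves room for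
  both the distortion of the node (two moves) and the step to a child (one move at each level).\<close>

definition grid_node :: "'m::metric_space set \<Rightarrow> ((nat \<Rightarrow> real) \<Rightarrow> 'm) \<Rightarrow> nat set \<Rightarrow> 'm grid_map" where
  "grid_node C g A = (A, restrict (\<lambda>v. near C (g v) (dyad (card A) / 4)) (grid_vectors A))"

lemma grid_node_in_approx_tree:
  fixes g :: "(nat \<Rightarrow> real) \<Rightarrow> 'm::metric_space"
  assumes C: "closure C = UNIV"
    and g: "\<forall>v\<in>D. \<forall>w\<in>D. L * dinf v w \<le> dist (g v) (g w) \<and> dist (g v) (g w) \<le> U * dinf v w"
    and "finite A" and "grid_vectors A \<subseteq> D"
  shows "grid_node C g A \<in> approx_tree L U C"
proof -
  define e where "e = dyad (card A) / 4"
  have "e > 0" using dyad_pos by (simp add: e_def)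
  define h where "h = restrict (\<lambda>v. near C (g v) e) (grid_vectors A)"
  have hC: "h \<in> grid_vectors A \<rightarrow>\<^sub>E C" unfolding h_def using near_dense(1)[OF C \<open>e > 0\<close>] by simp
  have close: "dist (h v) (g v) < e" if "v \<in> grid_vectors A" for v
    using near_dense(2)[OF C \<open>e > 0\<close>] that by (simp add: h_def)
  have "L * dinf v w - dyad (card A) \<le> dist (h v) (h w) \<and> dist (h v) (h w) \<le> U * dinf v w + dyad (card A)"
    if v: "v \<in> grid_vectors A" and w: "w \<in> grid_vectors A" for v w
  proof -
    have "L * dinf v w \<le> dist (g v) (g w) \<and> dist (g v) (g w) \<le> U * dinf v w"
      using g assms(4) v w by blast
    moreover have "\<bar>dist (h v) (h w) - dist (g v) (g w)\<bar> \<le> dist (h v) (g v) + dist (h w) (g w)"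
      by (rule abs_dist_diff_le_sum)
    ultimately show ?thesis using close[OF v] close[OF w] unfolding e_def by linarith
  qed
  then show ?thesis using \<open>finite A\<close> hC unfolding approx_tree_def grid_node_def h_def e_def by blast
qed

lemma grid_node_child:
  assumes C: "closure C = UNIV" and "finite A" and "\<forall>a\<in>A. a < m"
  shows "approx_child (grid_node C g A) (grid_node C g (insert m A))"
proof -
  have "m \<notin> A" using assms(3) by blast
  then have card: "card (insert m A) = Suc (card A)" using \<open>finite A\<close> by simp
  define e where "e = dyad (card A) / 4"
  define e' where "e' = dyad (card (insert m A)) / 4"
  have "e > 0" "e' > 0" using dyad_pos by (simp_all add: e_def e'_def)
  have "e' + e \<le> dyad (card A)" using dyad_pos[of "card A"] by (simp add: e_def e'_def card dyad_Suc)
  have "dist (near C (g v) e') (near C (g v) e) \<le> dyad (card A)" for v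
  proof -
    have "dist (near C (g v) e') (near C (g v) e)
        \<le> dist (near C (g v) e') (g v) + dist (near C (g v) e) (g v)"
      by (rule dist_triangle2)
    also have "\<dots> \<le> e' + e"
      using near_dense(2)[OF C \<open>e > 0\<close>, of "g v"] near_dense(2)[OF C \<open>e' > 0\<close>, of "g v"] by linarith
    finally show ?thesis using \<open>e' + e \<le> dyad (card A)\<close> by linarith
  qed
  moreover have "grid_vectors A \<subseteq> grid_vectors (insert m A)"
    using \<open>finite A\<close> by (intro grid_vectors_mono) auto
  ultimately show ?thesis
    using assms(3) unfolding approx_child_def grid_node_def e_def e'_def by auto
qed

lemma approx_tree_root_rank:
  fixes g :: "(nat \<Rightarrow> real) \<Rightarrow> 'm::metric_space"
  assumes "fundamental_system seq" "schreier_system seq S" "closure C = UNIV"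
    and g: "\<forall>v\<in>schreier_Q (S b). \<forall>w\<in>schreier_Q (S b).
      L * dinf v w \<le> dist (g v) (g w) \<and> dist (g v) (g w) \<le> U * dinf v w"
  shows "rank_at_least (approx_tree L U C) approx_child b (grid_node C g {})"
proof (rule schreier_root_rank[OF assms(1,2)])
  show "grid_node C g A \<in> approx_tree L U C" if "finite A" "G \<in> S b" "A \<subseteq> G" for A G
    using that grid_vectors_subset_schreier_Q
    by (intro grid_node_in_approx_tree[OF assms(3) g]) auto
  show "approx_child (grid_node C g A) (grid_node C g (insert m A))"
    if "finite A" "\<forall>a\<in>A. a < m" for A m
    using that by (rule grid_node_child[OF assms(3)])
qed

lemma approx_tree_infinite_branch:
  fixes S :: "'i::wellorder \<Rightarrow> nat set set" and C :: "'m::metric_space set"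
  assumes "\<forall>a::'i. countable {b. b < a}" "\<not> countable (UNIV :: 'i set)"
    and "fundamental_system seq" "schreier_system seq S"
    and C: "countable C" "closure C = UNIV"
    and cofinal: "\<forall>a. \<exists>b\<ge>a. \<exists>g :: (nat \<Rightarrow> real) \<Rightarrow> 'm.
      \<forall>v\<in>schreier_Q (S b). \<forall>w\<in>schreier_Q (S b).
        L * dinf v w \<le> dist (g v) (g w) \<and> dist (g v) (g w) \<le> U * dinf v w"
  obtains f where "fst (f 0) = {}" "\<And>n. f n \<in> approx_tree L U C"
    "\<And>n. approx_child (f n) (f (Suc n))"
proof -
  let ?T = "approx_tree L U C"
  have unbounded: "\<forall>a::'i. \<exists>t\<in>{t \<in> ?T. fst t = {}}. rank_at_least ?T approx_child a t"
  proof
    fix a :: 'i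
    obtain b and g :: "(nat \<Rightarrow> real) \<Rightarrow> 'm" where "a \<le> b"
      and g: "\<forall>v\<in>schreier_Q (S b). \<forall>w\<in>schreier_Q (S b).
        L * dinf v w \<le> dist (g v) (g w) \<and> dist (g v) (g w) \<le> U * dinf v w"
      using cofinal by blast
    have root: "rank_at_least ?T approx_child b (grid_node C g {})"
      using assms(3,4) C(2) g by (rule approx_tree_root_rank)
    then have "grid_node C g {} \<in> {t \<in> ?T. fst t = {}}"
      by (simp add: rank_at_least_in_tree grid_node_def)
    moreover have "rank_at_least ?T approx_child a (grid_node C g {})"
      using root \<open>a \<le> b\<close> by (rule rank_at_least_mono)
    ultimately show "\<exists>t\<in>{t \<in> ?T. fst t = {}}. rank_at_least ?T approx_child a t" by blast
  qed
  have branching: "\<forall>t\<in>?T. countable {c. approx_child t c \<and> c \<in> ?T}"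
    using approx_tree_countable_children[OF C(1)] by blast
  obtain f where f: "f 0 \<in> {t \<in> ?T. fst t = {}}" "\<And>n. f n \<in> ?T"
    "\<And>n. approx_child (f n) (f (Suc n))"
    using infinite_branch_of_unbounded_rank[OF assms(1,2) branching
        approx_tree_countable_roots[OF C(1)] unbounded] by blast
  show thesis by (rule that) (use f in auto)
qed

section \<open>Limits of approximate embeddings\<close>

lemma Cauchy_if_dist_le_null:
  fixes X :: "nat \<Rightarrow> 'a::metric_space"
  assumes "b \<longlonglongrightarrow> 0" and "\<And>m n. k \<le> n \<Longrightarrow> n \<le> m \<Longrightarrow> dist (X m) (X n) \<le> b n"
  shows "Cauchy X"
  unfolding Cauchy_altdef2
proof (intro allI impI)
  fix e :: real assume "e > 0"
  then obtain M where M: "\<And>n. n \<ge> M \<Longrightarrow> \<bar>b n\<bar> < e"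
    using assms(1) by (auto simp: LIMSEQ_iff)
  have "dist (X n) (X (max M k)) < e" if "n \<ge> max M k" for n
    using assms(2)[of "max M k" n] M[of "max M k"] that by simp
  then show "\<exists>N. \<forall>n\<ge>N. dist (X n) (X N) < e" by blast
qed

lemma convergent_if_dist_Suc_le_dyad:
  fixes X :: "nat \<Rightarrow> 'a::complete_space"
  assumes "\<forall>\<^sub>F n in sequentially. dist (X (Suc n)) (X n) \<le> dyad n"
  shows "convergent X"
proof -
  obtain k where k: "\<And>n. n \<ge> k \<Longrightarrow> dist (X (Suc n)) (X n) \<le> dyad n"
    using assms by (auto simp: eventually_sequentially)
  have telescope: "dist (X (n + j)) (X n) \<le> 2 * dyad n - 2 * dyad (n + j)" if "n \<ge> k" for n j
  proof (induction j)
    case (Suc j)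
    have "dist (X (n + Suc j)) (X n) \<le> dist (X (Suc (n + j))) (X (n + j)) + dist (X (n + j)) (X n)"
      by (simp add: dist_triangle)
    then show ?case using Suc k[of "n + j"] that dyad_Suc[of "n + j"] by simp
  qed simp
  have "dist (X m) (X n) \<le> 2 * dyad n" if "k \<le> n" "n \<le> m" for m n
    using telescope[OF \<open>k \<le> n\<close>, of "m - n"] that dyad_pos[of m] by simp
  moreover have "(\<lambda>n. 2 * dyad n) \<longlonglongrightarrow> 0" using tendsto_mult_right_zero[OF dyad_tendsto_zero] .
  ultimately have "Cauchy X" by (intro Cauchy_if_dist_le_null[of "\<lambda>n. 2 * dyad n" k]) auto
  then show ?thesis by (simp add: Cauchy_convergent_iff)
qed

lemma dist_limit_bounds:
  fixes f g :: "nat \<Rightarrow> 'a::metric_space"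
  assumes "f \<longlonglongrightarrow> a" "g \<longlonglongrightarrow> b" "e \<longlonglongrightarrow> 0"
    and "\<forall>\<^sub>F n in sequentially. lo - e n \<le> dist (f n) (g n) \<and> dist (f n) (g n) \<le> hi + e n"
  shows "lo \<le> dist a b \<and> dist a b \<le> hi"
proof -
  have lim: "(\<lambda>n. dist (f n) (g n)) \<longlonglongrightarrow> dist a b" using assms(1,2) by (rule tendsto_dist)
  have lo: "(\<lambda>n. lo - e n) \<longlonglongrightarrow> lo" using tendsto_diff[OF tendsto_const assms(3), of lo] by simp
  have hi: "(\<lambda>n. hi + e n) \<longlonglongrightarrow> hi" using tendsto_add[OF tendsto_const assms(3), of hi] by simp
  have "lo \<le> dist a b"
    by (rule tendsto_le[OF _ lim lo]) (use assms(4) in \<open>auto elim: eventually_mono\<close>)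
  moreover have "dist a b \<le> hi"
    by (rule tendsto_le[OF _ hi lim]) (use assms(4) in \<open>auto elim: eventually_mono\<close>)
  ultimately show ?thesis ..
qed

definition rat_c00 :: "nat set \<Rightarrow> (nat \<Rightarrow> real) set" where
  "rat_c00 N = {v. finite {i. v i \<noteq> 0} \<and> (\<forall>i. v i \<noteq> 0 \<longrightarrow> i \<in> N) \<and> (\<forall>i. v i \<in> \<rat>)}"

lemma eventually_in_grid_vectors:
  assumes "incseq A" "\<And>n. card (A n) = n" "v \<in> rat_c00 (\<Union>n. A n)"
  shows "\<forall>\<^sub>F n in sequentially. v \<in> grid_vectors (A n)"
proof -
  have "\<forall>i\<in>{i. v i \<noteq> 0}. \<forall>\<^sub>F n in sequentially. i \<in> A n \<and> v i \<in> rat_grid n"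
  proof
    fix i assume "i \<in> {i. v i \<noteq> 0}"
    then obtain k1 where "i \<in> A k1" using assms(3) by (auto simp: rat_c00_def)
    moreover have "v i \<in> \<rat>" using assms(3) by (simp add: rat_c00_def)
    then obtain k2 where "v i \<in> rat_grid k2" by (rule Rats_in_rat_grid)
    ultimately show "\<forall>\<^sub>F n in sequentially. i \<in> A n \<and> v i \<in> rat_grid n"
      using assms(1) rat_grid_mono[of k2]
      by (intro eventually_sequentiallyI[of "max k1 k2"]) (auto simp: incseq_def subset_iff)
  qed
  then have "\<forall>\<^sub>F n in sequentially. \<forall>i\<in>{i. v i \<noteq> 0}. i \<in> A n \<and> v i \<in> rat_grid n"
    using assms(3) by (intro eventually_ball_finite) (auto simp: rat_c00_def)
  then show ?thesis
  proof (rule eventually_mono)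
    fix n assume n: "\<forall>i\<in>{i. v i \<noteq> 0}. i \<in> A n \<and> v i \<in> rat_grid n"
    have "v i = 0" if "i \<notin> A n" for i using n that by blast
    moreover have "v i \<in> rat_grid n" for i using n zero_in_rat_grid by (cases "v i = 0") auto
    ultimately show "v \<in> grid_vectors (A n)" by (simp add: grid_vectors_def assms(2))
  qed
qed

lemma approx_child_card:
  assumes "approx_child t t'" "finite (fst t)"
  shows "card (fst t') = Suc (card (fst t))" "fst t \<subseteq> fst t'"
proof -
  obtain m where "\<forall>a\<in>fst t. a < m" "fst t' = insert m (fst t)"
    using assms(1) by (auto simp: approx_child_def)
  then show "card (fst t') = Suc (card (fst t))" "fst t \<subseteq> fst t'" using assms(2) by auto
qed

lemma approx_branch_limit:
  fixes f :: "nat \<Rightarrow> 'm::complete_space grid_map"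
  assumes tree: "\<And>n. f n \<in> approx_tree L U C"
    and child: "\<And>n. approx_child (f n) (f (Suc n))" and root: "fst (f 0) = {}"
  obtains N and H :: "(nat \<Rightarrow> real) \<Rightarrow> 'm" where "infinite N"
    "\<forall>v\<in>rat_c00 N. \<forall>w\<in>rat_c00 N. L * dinf v w \<le> dist (H v) (H w) \<and> dist (H v) (H w) \<le> U * dinf v w"
proof -
  define A where "A n = fst (f n)" for n
  define h where "h n = snd (f n)" for n
  have fin: "finite (A n)" for n using tree[of n] by (auto simp: approx_tree_def A_def)
  have card: "card (A n) = n" for n
    by (induction n) (simp_all add: A_def root approx_child_card(1)[OF child fin[unfolded A_def]])
  have "incseq A" using approx_child_card(2)[OF child fin[unfolded A_def]] by (intro incseq_SucI) (simp add: A_def)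
  define N where "N = (\<Union>n. A n)"
  have "infinite N"
  proof
    assume "finite N"
    then have "card (A (Suc (card N))) \<le> card N" by (intro card_mono) (auto simp: N_def)
    then show False using card by simp
  qed
  have in_grid: "\<forall>\<^sub>F n in sequentially. v \<in> grid_vectors (A n)" if "v \<in> rat_c00 N" for v
    using eventually_in_grid_vectors[OF \<open>incseq A\<close> card] that by (simp add: N_def)
  have node: "L * dinf v w - dyad n \<le> dist (h n v) (h n w) \<and> dist (h n v) (h n w) \<le> U * dinf v w + dyad n"
    if "v \<in> grid_vectors (A n)" "w \<in> grid_vectors (A n)" for n v w
    using tree[of n] that card[of n] by (cases "f n") (auto simp: approx_tree_def A_def h_def)
  have step: "dist (h (Suc n) v) (h n v) \<le> dyad n" if "v \<in> grid_vectors (A n)" for n v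
    using child[of n] that card[of n] by (auto simp: approx_child_def A_def h_def)
  have conv: "(\<lambda>n. h n v) \<longlonglongrightarrow> lim (\<lambda>n. h n v)" if "v \<in> rat_c00 N" for v
    using in_grid[OF that] step
    by (intro convergent_LIMSEQ_iff[THEN iffD1] convergent_if_dist_Suc_le_dyad)
      (auto elim: eventually_mono)
  define H where "H v = lim (\<lambda>n. h n v)" for v
  have "L * dinf v w \<le> dist (H v) (H w) \<and> dist (H v) (H w) \<le> U * dinf v w"
    if "v \<in> rat_c00 N" "w \<in> rat_c00 N" for v w
    unfolding H_def using conv[OF that(1)] conv[OF that(2)] dyad_tendsto_zero
    by (rule dist_limit_bounds)
      (use eventually_conj[OF in_grid[OF that(1)] in_grid[OF that(2)]] node in \<open>auto elim: eventually_mono\<close>)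
  with \<open>infinite N\<close> show thesis by (intro that[of N H]) auto
qed

section \<open>Embedding separable spaces into rational finitely supported vectors\<close>

text \<open>Aharoni-type coordinates for a dense sequence \<open>xs\<close>: the coordinate \<open>(k, j)\<close> is positive
  only near \<open>xs j\<close> (within \<open>3 \<cdot> 2\<^sup>k\<close>) and away from \<open>xs 0, \<dots>, xs (j - 1)\<close> (beyond \<open>2\<^sup>k\<close>).\<close>

definition bump :: "(nat \<Rightarrow> 'x::metric_space) \<Rightarrow> 'x \<Rightarrow> int \<times> nat \<Rightarrow> real" where
  "bump xs x z = (if snd z = 0 then 0 else
     max 0 (min (3 * 2 powr real_of_int (fst z) - dist x (xs (snd z)))
                (infdist x (xs ` {..<snd z}) - 2 powr real_of_int (fst z))))"

lemma bump_nonneg: "0 \<le> bump xs x z"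
  by (simp add: bump_def)

lemma abs_max0_min_diff_le:
  fixes a b a' b' c :: real
  assumes "\<bar>a - a'\<bar> \<le> c" "\<bar>b - b'\<bar> \<le> c"
  shows "\<bar>max 0 (min a b) - max 0 (min a' b')\<bar> \<le> c"
  using assms by (auto simp: max_def min_def abs_if split: if_splits)

lemma bump_lipschitz: "\<bar>bump xs x z - bump xs y z\<bar> \<le> dist x y"
proof (cases "snd z = 0")
  case False
  let ?r = "2 powr real_of_int (fst z)"
  have "\<bar>(3 * ?r - dist x (xs (snd z))) - (3 * ?r - dist y (xs (snd z)))\<bar> \<le> dist x y"
    using dist_triangle[of x "xs (snd z)" y] dist_triangle[of y "xs (snd z)" x] by (simp add: dist_commute)
  moreover have "\<bar>(infdist x (xs ` {..<snd z}) - ?r) - (infdist y (xs ` {..<snd z}) - ?r)\<bar> \<le> dist x y"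
    using infdist_triangle_abs[of x _ y] by simp
  ultimately show ?thesis using False abs_max0_min_diff_le by (simp add: bump_def)
qed (simp add: bump_def)

lemma infdist_image_lessThan_ge:
  assumes "n > 0" "\<And>i. i < n \<Longrightarrow> c \<le> dist x (xs i)"
  shows "c \<le> infdist x (xs ` {..<n})"
proof -
  have "xs ` {..<n} \<noteq> {}" using assms by auto
  then show ?thesis unfolding infdist_notempty[OF \<open>xs ` {..<n} \<noteq> {}\<close>]
    using assms(2) by (intro cINF_greatest) auto
qed

lemma bump_separates_at:
  assumes r: "r = 2 powr k" and far: "5 * r \<le> dist x y"
    and first: "dist x (xs j) < 2 * r" "\<And>i. i < j \<Longrightarrow> 2 * r \<le> dist x (xs i)" and "j \<ge> 1"
  shows "bump xs x (k, j) \<ge> r" "bump xs y (k, j) = 0"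
proof -
  have "2 * r \<le> infdist x (xs ` {..<j})"
    using \<open>j \<ge> 1\<close> first(2) by (intro infdist_image_lessThan_ge) auto
  then show "bump xs x (k, j) \<ge> r" using \<open>j \<ge> 1\<close> first(1) r by (simp add: bump_def)
  have "dist x y \<le> dist x (xs j) + dist y (xs j)" by (rule dist_triangle2)
  then have "3 * 2 powr k - dist y (xs j) \<le> 0" using far first(1) r by linarith
  then show "bump xs y (k, j) = 0" using \<open>j \<ge> 1\<close> by (simp add: bump_def)
qed

lemma exists_dyadic_scale:
  assumes "a > 0"
  obtains k :: int where "2 powr k \<le> a" "a < 2 * 2 powr k"
proof
  define k where "k = \<lfloor>log 2 a\<rfloor>"
  have "real_of_int k \<le> log 2 a" unfolding k_def by simp
  then show "2 powr k \<le> a" using le_log_iff[of 2 a] assms by simp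
  have "log 2 a < real_of_int k + 1" unfolding k_def by linarith
  then have "a < 2 powr (real_of_int k + 1)" using log_less_iff[of 2 a] assms by simp
  then show "a < 2 * 2 powr k" by (simp add: powr_add)
qed

text \<open>Values below \<open>2\<^sup>-\<^sup>p\<close> are rounded to \<open>0\<close>, which keeps supports finite.\<close>

definition quantize :: "nat \<Rightarrow> real \<Rightarrow> real" where
  "quantize p a = (if \<bar>a\<bar> < dyad p then 0 else of_int \<lfloor>a / dyad p\<rfloor> * dyad p)"

lemma quantize_err: "\<bar>quantize p a - a\<bar> \<le> dyad p"
proof (cases "\<bar>a\<bar> < dyad p")
  case False
  define e where "e = dyad p"
  have "e > 0" by (simp add: e_def dyad_pos)
  have "of_int \<lfloor>a / e\<rfloor> * e \<le> a" using \<open>e > 0\<close> by (simp add: pos_le_divide_eq[symmetric])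
  moreover have "a < (of_int \<lfloor>a / e\<rfloor> + 1) * e" using \<open>e > 0\<close> by (simp add: pos_divide_less_eq[symmetric])
  moreover have "quantize p a = of_int \<lfloor>a / e\<rfloor> * e" using False by (simp add: quantize_def e_def)
  ultimately show ?thesis by (simp add: e_def algebra_simps abs_if)
qed (simp add: quantize_def)

lemma quantize_Rats: "quantize p a \<in> \<rat>"
  by (simp add: quantize_def dyad_Rats)

lemma quantize_nonzero: "quantize p a \<noteq> 0 \<Longrightarrow> \<bar>a\<bar> \<ge> dyad p"
  by (auto simp: quantize_def split: if_splits)

definition rounded_coords ::
    "(int \<times> nat \<Rightarrow> nat) \<Rightarrow> (nat \<Rightarrow> 'x::metric_space) \<Rightarrow> nat \<Rightarrow> 'x \<Rightarrow> nat \<Rightarrow> real" where "rounded_coords \<iota> xs p x i = (if i \<in> range \<iota> then quantize p (bump xs x (inv \<iota> i)) else 0)"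

lemma rounded_coords_apply: "inj \<iota> \<Longrightarrow> rounded_coords \<iota> xs p x (\<iota> z) = quantize p (bump xs x z)"
  by (simp add: rounded_coords_def)

lemma rounded_coords_Cauchy:
  "dinf (rounded_coords \<iota> xs p x) (rounded_coords \<iota> xs q x) \<le> dyad p + dyad q"
proof (rule dinf_le)
  fix i
  let ?a = "bump xs x (inv \<iota> i)"
  have "\<bar>quantize p ?a - quantize q ?a\<bar> \<le> dyad p + dyad q"
    using quantize_err[of p ?a] quantize_err[of q ?a] by linarith
  then show "\<bar>rounded_coords \<iota> xs p x i - rounded_coords \<iota> xs q x i\<bar> \<le> dyad p + dyad q"
    using dyad_pos[of p] dyad_pos[of q] by (simp add: rounded_coords_def)
qed

lemma rounded_coords_lipschitz:
  "dinf (rounded_coords \<iota> xs p x) (rounded_coords \<iota> xs p y) \<le> dist x y + 2 * dyad p"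
proof (rule dinf_le)
  fix i
  let ?z = "inv \<iota> i"
  have "\<bar>quantize p (bump xs x ?z) - quantize p (bump xs y ?z)\<bar> \<le> dist x y + 2 * dyad p"
    using quantize_err[of p "bump xs x ?z"] quantize_err[of p "bump xs y ?z"]
      bump_lipschitz[of xs x ?z y] by linarith
  then show "\<bar>rounded_coords \<iota> xs p x i - rounded_coords \<iota> xs p y i\<bar> \<le> dist x y + 2 * dyad p"
    using dyad_pos[of p] by (simp add: rounded_coords_def)
qed

context
  fixes xs :: "nat \<Rightarrow> 'x::metric_space" and X :: "'x set"
  assumes dense: "\<And>x e. x \<in> X \<Longrightarrow> e > 0 \<Longrightarrow> \<exists>j. dist x (xs j) < e"
begin

lemma bump_separates:
  assumes "x \<in> X" "y \<in> X"
  obtains z where "\<bar>bump xs x z - bump xs y z\<bar> \<ge> dist x y / 10"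
proof (cases "x = y")
  case False
  then have "dist x y / 5 > 0" by simp
  then obtain k :: int where k: "2 powr k \<le> dist x y / 5" "dist x y / 5 < 2 * 2 powr k"
    by (rule exists_dyadic_scale)
  define r where "r = 2 powr k"
  have far: "5 * r \<le> dist x y" "5 * r \<le> dist y x" and "dist x y / 10 < r"
    using k by (auto simp: r_def dist_commute)
  have "r > 0" by (simp add: r_def)
  define jx where "jx = (LEAST j. dist x (xs j) < 2 * r)"
  define jy where "jy = (LEAST j. dist y (xs j) < 2 * r)"
  have jx: "dist x (xs jx) < 2 * r" "\<And>i. i < jx \<Longrightarrow> 2 * r \<le> dist x (xs i)"
    unfolding jx_def using dense[OF assms(1), of "2 * r"] \<open>r > 0\<close>
    by (auto intro: LeastI_ex dest: not_less_Least)
  have jy: "dist y (xs jy) < 2 * r" "\<And>i. i < jy \<Longrightarrow> 2 * r \<le> dist y (xs i)"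
    unfolding jy_def using dense[OF assms(2), of "2 * r"] \<open>r > 0\<close>
    by (auto intro: LeastI_ex dest: not_less_Least)
  consider "jx \<ge> 1" | "jy \<ge> 1" | "jx = 0" "jy = 0" by linarith
  then show thesis
  proof cases
    case 1
    with bump_separates_at[where xs = xs and x = x and j = jx, OF r_def far(1) jx]
      \<open>dist x y / 10 < r\<close> show thesis
      by (intro that[of "(k, jx)"]) simp
  next
    case 2
    with bump_separates_at[where xs = xs and x = y and j = jy, OF r_def far(2) jy]
      \<open>dist x y / 10 < r\<close> show thesis
      by (intro that[of "(k, jy)"]) simp
  next
    case 3
    then have "dist x y < 4 * r" using jx(1) jy(1) dist_triangle2[of x y "xs 0"] by simp
    then show thesis using far \<open>r > 0\<close> by simp
  qed
qed (intro that, simp)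

lemma finite_large_bumps:
  assumes "x \<in> X" "e > 0"
  shows "finite {z. bump xs x z \<ge> e}"
proof -
  define J where "J k = (LEAST j. dist x (xs j) < 2 powr k)" for k :: int
  have J: "dist x (xs (J k)) < 2 powr k" for k
    unfolding J_def using dense[OF assms(1), of "2 powr k"] by (auto intro: LeastI_ex)
  define K where "K = {k::int. e / 3 \<le> 2 powr k \<and> 2 powr k < dist x (xs 0)}"
  have "{z. bump xs x z \<ge> e} \<subseteq> (\<Union>k\<in>K. {k} \<times> {..J k})"
  proof
    fix z assume "z \<in> {z. bump xs x z \<ge> e}"
    then obtain k n where z: "z = (k, n)" "bump xs x (k, n) \<ge> e" by (cases z) auto
    then have "n \<noteq> 0" using assms(2) by (auto simp: bump_def split: if_splits)
    with z have ab: "3 * 2 powr k - dist x (xs n) \<ge> e" "infdist x (xs ` {..<n}) - 2 powr k \<ge> e"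
      using assms(2) by (auto simp: bump_def max_def min_def split: if_splits)
    then have "e / 3 \<le> 2 powr k" using zero_le_dist[of x "xs n"] by linarith
    moreover have "infdist x (xs ` {..<n}) \<le> dist x (xs 0)" using \<open>n \<noteq> 0\<close> by (intro infdist_le) auto
    then have "2 powr k < dist x (xs 0)" using ab(2) assms(2) by linarith
    moreover have "n \<le> J k"
    proof (rule ccontr)
      assume "\<not> n \<le> J k"
      then have "infdist x (xs ` {..<n}) \<le> dist x (xs (J k))" by (intro infdist_le) auto
      then show False using J[of k] ab(2) assms(2) by linarith
    qed
    ultimately show "z \<in> (\<Union>k\<in>K. {k} \<times> {..J k})" using z by (auto simp: K_def)
  qed
  moreover have "K \<subseteq> {\<lfloor>log 2 (e/3)\<rfloor> .. \<lceil>log 2 (dist x (xs 0))\<rceil>}"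
  proof
    fix k assume "k \<in> K"
    then have k: "e / 3 \<le> 2 powr k" "2 powr k < dist x (xs 0)" by (auto simp: K_def)
    have "dist x (xs 0) > 0" using k(2) powr_gt_zero[of 2 k] by linarith
    then have "log 2 (e/3) \<le> k" "k \<le> log 2 (dist x (xs 0))"
      using k assms(2) log_le_iff[of 2 "e/3" k] le_log_iff[of 2 "dist x (xs 0)" k] by simp_all
    then show "k \<in> {\<lfloor>log 2 (e/3)\<rfloor> .. \<lceil>log 2 (dist x (xs 0))\<rceil>}"
      by (simp add: floor_le_iff le_ceiling_iff)
  qed
  then have "finite K" by (rule finite_subset) simp
  ultimately show ?thesis by (meson finite_UN_I finite_atMost finite_SigmaI finite.emptyI finite_insert finite_subset)
qed

lemma rounded_coords_finite_support:
  assumes "x \<in> X"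
  shows "finite {i. rounded_coords \<iota> xs p x i \<noteq> 0}"
proof -
  have "{i. rounded_coords \<iota> xs p x i \<noteq> 0} \<subseteq> \<iota> ` {z. bump xs x z \<ge> dyad p}"
  proof
    fix i assume "i \<in> {i. rounded_coords \<iota> xs p x i \<noteq> 0}"
    then have "i \<in> range \<iota>" and q: "quantize p (bump xs x (inv \<iota> i)) \<noteq> 0"
      by (auto simp: rounded_coords_def split: if_splits)
    then have "i = \<iota> (inv \<iota> i)" by (simp add: f_inv_into_f)
    moreover have "bump xs x (inv \<iota> i) \<ge> dyad p"
      using quantize_nonzero[OF q] bump_nonneg[of xs x "inv \<iota> i"] by simp
    ultimately show "i \<in> \<iota> ` {z. bump xs x z \<ge> dyad p}" by blast
  qed
  then show ?thesis using finite_large_bumps[OF assms dyad_pos] finite_subset by blast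
qed

lemma rounded_coords_separate:
  assumes "inj \<iota>" "x \<in> X" "y \<in> X"
  shows "dist x y / 10 - 2 * dyad p \<le> dinf (rounded_coords \<iota> xs p x) (rounded_coords \<iota> xs p y)"
proof -
  let ?u = "rounded_coords \<iota> xs p"
  obtain z where z: "\<bar>bump xs x z - bump xs y z\<bar> \<ge> dist x y / 10"
    using bump_separates[OF assms(2,3)] by blast
  have "finite ({i. ?u x i \<noteq> 0} \<union> {i. ?u y i \<noteq> 0})"
    using rounded_coords_finite_support[OF assms(2)] rounded_coords_finite_support[OF assms(3)] by simp
  then have "finite {i. ?u x i \<noteq> ?u y i}" by (rule rev_finite_subset) auto
  then have "\<bar>?u x (\<iota> z) - ?u y (\<iota> z)\<bar> \<le> dinf (?u x) (?u y)" by (rule abs_le_dinf)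
  moreover have "\<bar>?u x (\<iota> z) - ?u y (\<iota> z)\<bar> \<ge> dist x y / 10 - 2 * dyad p"
    unfolding rounded_coords_apply[OF assms(1)]
    using quantize_err[of p "bump xs x z"] quantize_err[of p "bump xs y z"] z by linarith
  ultimately show ?thesis by linarith
qed

end

lemma separable_set_dense_sequence:
  assumes "separable_set X"
  obtains xs :: "nat \<Rightarrow> 'x::metric_space" where "\<And>x e. x \<in> X \<Longrightarrow> e > 0 \<Longrightarrow> \<exists>j. dist x (xs j) < e"
proof -
  obtain D where D: "countable D" "D \<subseteq> X" "X \<subseteq> closure D"
    using assms unfolding separable_set_def by blast
  have "\<exists>j. dist x (from_nat_into D j) < e" if "x \<in> X" "e > 0" for x e
  proof -
    have "\<exists>y\<in>D. dist y x < e" using D(3) that closure_approachable by blast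
    then obtain y where "y \<in> D" "dist y x < e" by blast
    moreover obtain j where "from_nat_into D j = y" using from_nat_into_surj[OF D(1) \<open>y \<in> D\<close>] by blast
    ultimately show ?thesis by (auto simp: dist_commute)
  qed
  then show thesis by (rule that)
qed

lemma rat_c00_approximations:
  fixes X :: "'x::metric_space set"
  assumes "infinite N" "separable_set X"
  obtains u :: "nat \<Rightarrow> 'x \<Rightarrow> nat \<Rightarrow> real" where
    "\<And>p x. x \<in> X \<Longrightarrow> u p x \<in> rat_c00 N"
    "\<And>p q x. dinf (u p x) (u q x) \<le> dyad p + dyad q"
    "\<And>p x y. x \<in> X \<Longrightarrow> y \<in> X \<Longrightarrow> dist x y / 10 - 2 * dyad p \<le> dinf (u p x) (u p y)"
    "\<And>p x y. dinf (u p x) (u p y) \<le> dist x y + 2 * dyad p"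
proof -
  obtain xs :: "nat \<Rightarrow> 'x" where dense: "\<And>x e. x \<in> X \<Longrightarrow> e > 0 \<Longrightarrow> \<exists>j. dist x (xs j) < e"
    using separable_set_dense_sequence[OF assms(2)] by blast
  define \<iota> :: "int \<times> nat \<Rightarrow> nat" where "\<iota> = enumerate N \<circ> to_nat"
  have "inj \<iota>" unfolding \<iota>_def by (intro inj_compose inj_enumerate assms(1) inj_to_nat)
  have "range \<iota> \<subseteq> N" using enumerate_in_set[OF assms(1)] by (auto simp: \<iota>_def)
  show thesis
  proof (rule that[of "rounded_coords \<iota> xs"])
    show "rounded_coords \<iota> xs p x \<in> rat_c00 N" if "x \<in> X" for p x
      using rounded_coords_finite_support[OF dense that] \<open>range \<iota> \<subseteq> N\<close>
      by (auto simp: rat_c00_def rounded_coords_def quantize_Rats)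
    show "dist x y / 10 - 2 * dyad p \<le> dinf (rounded_coords \<iota> xs p x) (rounded_coords \<iota> xs p y)"
      if "x \<in> X" "y \<in> X" for p x y
      using rounded_coords_separate[OF dense \<open>inj \<iota>\<close> that] .
  qed (rule rounded_coords_Cauchy rounded_coords_lipschitz)+
qed

lemma convergent_if_lipschitz_image_dyad_Cauchy:
  fixes H :: "(nat \<Rightarrow> real) \<Rightarrow> 'm::complete_space"
  assumes "U \<ge> 0" "\<And>p q. dist (H (v p)) (H (v q)) \<le> U * dinf (v p) (v q)"
    and "\<And>p q. dinf (v p) (v q) \<le> dyad p + dyad q"
  shows "convergent (\<lambda>p. H (v p))"
proof -
  have "dist (H (v m)) (H (v n)) \<le> 2 * U * dyad n" if "n \<le> m" for m n
  proof -
    have "dist (H (v m)) (H (v n)) \<le> U * (dyad m + dyad n)"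
      using assms(2)[of m n] mult_left_mono[OF assms(3) assms(1)] by (rule order_trans)
    also have "\<dots> \<le> 2 * U * dyad n"
      using dyad_antimono[OF that] assms(1) by (simp add: algebra_simps mult_left_mono)
    finally show ?thesis .
  qed
  moreover have "(\<lambda>n. 2 * U * dyad n) \<longlonglongrightarrow> 0" using tendsto_mult_right_zero[OF dyad_tendsto_zero] .
  ultimately have "Cauchy (\<lambda>p. H (v p))" by (intro Cauchy_if_dist_le_null[of "\<lambda>n. 2 * U * dyad n" 0]) auto
  then show ?thesis by (simp add: Cauchy_convergent_iff)
qed

lemma bilip_embedding_from_approximations:
  fixes H :: "(nat \<Rightarrow> real) \<Rightarrow> 'm::complete_space" and u :: "nat \<Rightarrow> 'x::metric_space \<Rightarrow> nat \<Rightarrow> real"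
  assumes "L > 0" "U \<ge> 0" "K > 0"
    and H: "\<forall>v\<in>W. \<forall>w\<in>W. L * dinf v w \<le> dist (H v) (H w) \<and> dist (H v) (H w) \<le> U * dinf v w"
    and u: "\<And>p x. x \<in> X \<Longrightarrow> u p x \<in> W"
    and cauchy: "\<And>p q x. dinf (u p x) (u q x) \<le> dyad p + dyad q"
    and lower: "\<And>p x y. x \<in> X \<Longrightarrow> y \<in> X \<Longrightarrow> dist x y / K - 2 * dyad p \<le> dinf (u p x) (u p y)"
    and upper: "\<And>p x y. dinf (u p x) (u p y) \<le> dist x y + 2 * dyad p"
  shows "\<exists>F :: 'x \<Rightarrow> 'm. bilip_embedding dist X dist UNIV F"
proof -
  have conv: "(\<lambda>p. H (u p x)) \<longlonglongrightarrow> lim (\<lambda>p. H (u p x))" if "x \<in> X" for x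
    using H u[OF that] cauchy \<open>U \<ge> 0\<close>
    by (intro convergent_LIMSEQ_iff[THEN iffD1] convergent_if_lipschitz_image_dyad_Cauchy) auto
  define F where "F x = lim (\<lambda>p. H (u p x))" for x
  have "L / K * dist x y \<le> dist (F x) (F y) \<and> dist (F x) (F y) \<le> U * dist x y"
    if "x \<in> X" "y \<in> X" for x y
  proof -
    have "L / K * dist x y - 2 * (L + U) * dyad p \<le> dist (H (u p x)) (H (u p y))
        \<and> dist (H (u p x)) (H (u p y)) \<le> U * dist x y + 2 * (L + U) * dyad p" for p
    proof -
      have "L * (dist x y / K - 2 * dyad p) \<le> L * dinf (u p x) (u p y)"
        using lower[OF that] \<open>L > 0\<close> by simp
      moreover have "U * dinf (u p x) (u p y) \<le> U * (dist x y + 2 * dyad p)"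
        using upper \<open>U \<ge> 0\<close> by (rule mult_left_mono)
      moreover have "L * dinf (u p x) (u p y) \<le> dist (H (u p x)) (H (u p y))
          \<and> dist (H (u p x)) (H (u p y)) \<le> U * dinf (u p x) (u p y)"
        using H u that by blast
      moreover have "0 \<le> L * dyad p" "0 \<le> U * dyad p" using \<open>L > 0\<close> \<open>U \<ge> 0\<close> dyad_pos[of p] by simp_all
      ultimately show ?thesis by (simp add: algebra_simps)
    qed
    moreover have "(\<lambda>p. 2 * (L + U) * dyad p) \<longlonglongrightarrow> 0" using tendsto_mult_right_zero[OF dyad_tendsto_zero] .
    ultimately show ?thesis unfolding F_def using conv[OF that(1)] conv[OF that(2)]
      by (intro dist_limit_bounds) auto
  qed
  then have "bilip_embedding dist X dist UNIV F" using \<open>L > 0\<close> \<open>K > 0\<close> by (intro bilip_embeddingI[of "L / K"]) auto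
  then show ?thesis by blast
qed

theorem theoremA:
  fixes seq :: "'i::wellorder \<Rightarrow> nat \<Rightarrow> 'i" and S :: "'i \<Rightarrow> nat set set"
  assumes omega1_pred: "\<forall>a::'i. countable {b. b < a}"
    and omega1_uncount: "\<not> countable (UNIV :: 'i set)"
    and "fundamental_system seq"
    and "schreier_system seq S"
    and M_separable: "separable_set (UNIV :: 'm::complete_space set)"
    and "\<forall>a. \<exists>f :: (nat \<Rightarrow> real) \<Rightarrow> 'm. bilip_embedding dinf (schreier_Q (S a)) dist UNIV f"
  shows "\<forall>X :: 'x::metric_space set. separable_set X \<longrightarrow>
           (\<exists>f :: 'x \<Rightarrow> 'm. bilip_embedding dist X dist UNIV f)"
proof (intro allI impI)
  fix X :: "'x set" assume "separable_set X"
  obtain C :: "'m set" where C: "countable C" "closure C = UNIV"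
    using M_separable unfolding separable_set_def by auto
  obtain L U where "L > 0" "U \<ge> 0" and cofinal: "\<forall>a. \<exists>b\<ge>a. \<exists>g :: (nat \<Rightarrow> real) \<Rightarrow> 'm.
      \<forall>v\<in>schreier_Q (S b). \<forall>w\<in>schreier_Q (S b).
        L * dinf v w \<le> dist (g v) (g w) \<and> dist (g v) (g w) \<le> U * dinf v w"
    by (rule cofinal_uniform_bilipschitz[OF omega1_pred omega1_uncount assms(6)])
  obtain f where f: "fst (f 0) = {}" "\<And>n. f n \<in> approx_tree L U C"
    "\<And>n. approx_child (f n) (f (Suc n))"
    using approx_tree_infinite_branch[OF omega1_pred omega1_uncount assms(3,4) C cofinal] by blast
  obtain N and H :: "(nat \<Rightarrow> real) \<Rightarrow> 'm" where "infinite N" and H: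
    "\<forall>v\<in>rat_c00 N. \<forall>w\<in>rat_c00 N. L * dinf v w \<le> dist (H v) (H w) \<and> dist (H v) (H w) \<le> U * dinf v w"
    using approx_branch_limit[OF f(2,3,1)] by blast
  obtain u :: "nat \<Rightarrow> 'x \<Rightarrow> nat \<Rightarrow> real" where u:
    "\<And>p x. x \<in> X \<Longrightarrow> u p x \<in> rat_c00 N"
    "\<And>p q x. dinf (u p x) (u q x) \<le> dyad p + dyad q"
    "\<And>p x y. x \<in> X \<Longrightarrow> y \<in> X \<Longrightarrow> dist x y / 10 - 2 * dyad p \<le> dinf (u p x) (u p y)"
    "\<And>p x y. dinf (u p x) (u p y) \<le> dist x y + 2 * dyad p"
    using rat_c00_approximations[OF \<open>infinite N\<close> \<open>separable_set X\<close>] by blast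
  show "\<exists>F :: 'x \<Rightarrow> 'm. bilip_embedding dist X dist UNIV F"
    by (rule bilip_embedding_from_approximations[where K = 10, OF \<open>L > 0\<close> \<open>U \<ge> 0\<close> _ H u]) simp
qed

end
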